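(* Let $\mu>1$ be a real number and $N\ge 1$ an integer. Let $a(1),a(2),\dots$ be a sequence of real numbers such that $a(n+m)\le a(n)+a(m)$ holds for all integers $n,m$ with $N\le n\le m\le \mu n$. Then $\lim_{n\to\infty} a(n)/n$ exists (possibly $-\infty$) and equals $\inf_{k\ge N} a(k)/k$. *)

theory Defs
  imports Complex_Main "HOL-Library.Extended_Real"
begin

end

theory Submission
  imports Defs
begin

text \<open>Fix \<open>k \<ge> N\<close> and put \<open>\<rho> = a k / k\<close>; doubling gives \<open>a (2^t k) \<le> 2^t k \<rho>\<close>.
  Suppose \<open>a x \<le> V x\<close> for all large \<open>x\<close>. A large \<open>n\<close> lies in \<open>[2^(J-1) T, 2^J T]\<close> for some
  \<open>T = 2^t k\<close>, and it can be walked down to \<open>T\<close> by repeatedly splitting off a large summand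
  \<open>d\<close> with \<open>d \<le> n - d \<le> \<mu> d\<close>. Each split costs at most \<open>V d\<close>, so
  \<open>a n \<le> a T + V (n - T) \<le> V n - (V - \<rho>) n / 2^J\<close>, where \<open>J\<close> depends only on \<open>\<mu>\<close>.
  Iterating this improvement from a crude linear bound (obtained by halving) pushes \<open>V\<close> down
  to \<open>\<rho>\<close>, so \<open>limsup a n / n \<le> a k / k\<close>; the matching lower bound is immediate.\<close>

lemma doubling_bracket:
  fixes P n :: nat
  assumes "0 < P" and "P < n"
  shows "\<exists>t. P * 2^t < n \<and> n \<le> P * 2^Suc t"
  using assms(2)
proof (induction n rule: less_induct)
  case (less n)
  show ?case
  proof (cases "n \<le> 2 * P")
    case True
    with less.prems show ?thesis by (intro exI[of _ 0]) simp
  next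
    case False
    have "(n + 1) div 2 < n" "P < (n + 1) div 2" using False \<open>0 < P\<close> by auto
    then obtain t where "P * 2^t < (n + 1) div 2" "(n + 1) div 2 \<le> P * 2^Suc t"
      using less.IH by blast
    then have "P * 2^Suc t < n" "n \<le> P * 2^Suc (Suc t)" by auto
    then show ?thesis by blast
  qed
qed

lemma exists_power_gap:
  fixes A B C :: real
  assumes "0 \<le> A" and "A < B"
  shows "\<exists>j. C * A^j \<le> B^j"
proof (cases "C \<le> 0")
  case True
  then show ?thesis using assms by (intro exI[of _ 0]) simp
next
  case False
  have "0 < B" using assms by linarith
  obtain j where "(A / B)^j < 1 / C"
    using real_arch_pow_inv[of "1 / C" "A / B"] False assms \<open>0 < B\<close> by auto
  then have "C * A^j < B^j"
    using False \<open>0 < B\<close> by (simp add: field_simps)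
  then show ?thesis by (intro exI[of _ j]) simp
qed

lemma linear_plus_gap_le_doubling:
  fixes T A :: real
  assumes "1 \<le> A" and "A < 2" and "2 / (2 - A) \<le> T"
  shows "T * A^j + (2^(j+1) - 2) \<le> T * 2^j"
proof (induction j)
  case 0
  show ?case by simp
next
  case (Suc j)
  have "2 \<le> (2 - A) * T" using assms by (simp add: pos_divide_le_eq mult.commute)
  moreover have "(2 - A) * T \<le> (2 - A) * T * A^j"
    using assms \<open>2 \<le> (2 - A) * T\<close> by (simp add: mult_le_cancel_left1)
  moreover have "T * A^Suc j = 2 * (T * A^j) - (2 - A) * T * A^j" by (simp add: algebra_simps)
  ultimately show ?case using Suc.IH by simp
qed

text \<open>The \<open>j\<close>-th interval \<open>[T A^j + 2^(j+1) - 2, T 2^j]\<close> contains, for every integer \<open>n\<close> of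
  the next one, an integer \<open>c\<close> with \<open>n/2 \<le> c \<le> n/A\<close>; the additive slack absorbs rounding.\<close>

lemma interval_predecessor:
  fixes A :: real and T n j :: nat
  assumes A: "1 < A" "A < 2" and T: "4 / (2 - A) \<le> real T"
    and n: "real T * A^Suc j + (2^(Suc j + 1) - 2) \<le> real n" "real n \<le> real T * 2^Suc j"
  shows "\<exists>c::nat. real T * A^j + (2^(j+1) - 2) \<le> real c \<and> real c \<le> real T * 2^j
           \<and> real n \<le> 2 * real c \<and> real c * A \<le> real n"
proof -
  define e :: "nat \<Rightarrow> real" where "e i = 2^(i+1) - 2" for i
  have e_nonneg: "0 \<le> e i" for i
    unfolding e_def using one_le_power[of "2::real" i] by simp
  define lo where "lo = max (real n / 2) (real T * A^j + e j)"
  define c where "c = nat \<lceil>lo\<rceil>"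
  have lo_le_c: "lo \<le> real c" and c_less: "real c < lo + 1"
    unfolding c_def lo_def by linarith+
  have "1 \<le> A^Suc j" using A by (intro one_le_power) simp
  then have "real T \<le> real T * A^Suc j" by (simp add: mult_le_cancel_left1)
  then have "real T \<le> real n" using n e_nonneg[of "Suc j"] unfolding e_def by linarith
  moreover have "4 \<le> real T * (2 - A)" using T A by (simp add: pos_divide_le_eq)
  ultimately have "4 \<le> real n * (2 - A)"
    using A mult_right_mono[of "real T" "real n" "2 - A"] by linarith
  then have "(real n / 2 + 1) * A \<le> real n" using A by (simp add: algebra_simps)
  moreover have "(real T * A^j + e j + 1) * A \<le> real n"
  proof -
    have "(e j + 1) * A \<le> (e j + 1) * 2" using A e_nonneg[of j] by (intro mult_left_mono) auto
    then show ?thesis using n unfolding e_def by (simp add: algebra_simps)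
  qed
  ultimately have "(lo + 1) * A \<le> real n" unfolding lo_def by (simp add: max_def)
  moreover have "real c * A < (lo + 1) * A" using c_less A by (intro mult_strict_right_mono) auto
  ultimately have "real c * A \<le> real n" by linarith
  moreover have "real c \<le> real T * 2^j"
  proof -
    have "2 / (2 - A) \<le> 4 / (2 - A)" using A by (intro divide_right_mono) auto
    then have "real T * A^j + e j \<le> real T * 2^j"
      using linear_plus_gap_le_doubling[of A "real T" j] A T unfolding e_def by linarith
    then have "lo \<le> real (T * 2^j)" unfolding lo_def using n by simp
    then have "c \<le> T * 2^j" using c_less by linarith
    then have "real c \<le> real (T * 2^j)" by (rule of_nat_mono)
    then show ?thesis by simp
  qed
  ultimately show ?thesis using lo_le_c unfolding lo_def e_def by (intro exI[of _ c]) auto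
qed

lemma eventually_doubling_base:
  fixes k J :: nat and A T0 :: real
  assumes "0 < k" and J: "4 * A^J \<le> 2^J" and "8 \<le> T0"
  shows "eventually (\<lambda>n. \<exists>T \<in> range (\<lambda>t. 2^t * k). T0 \<le> real T
           \<and> real T * A^J + (2^(J+1) - 2) \<le> real n \<and> real n \<le> real T * 2^J) sequentially"
proof -
  obtain J1 where J1: "J = Suc J1" using J by (cases J) auto
  define P where "P = 2^J1 * k"
  have "0 < P" using \<open>0 < k\<close> by (simp add: P_def)
  show ?thesis unfolding eventually_sequentially
  proof (intro exI allI impI)
    fix n assume n: "max (P + 1) (nat \<lceil>T0 * 2^J\<rceil>) \<le> n"
    then have "P < n" by simp
    then obtain t where t: "P * 2^t < n" "n \<le> P * 2^Suc t"
      using doubling_bracket[OF \<open>0 < P\<close>] by blast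
    define T where "T = 2^t * k"
    have "2^J1 * T < n" "n \<le> T * 2^J"
      using t unfolding P_def T_def J1 by (simp_all add: mult_ac)
    then have lower: "2^J1 * real T < real n" and upper: "real n \<le> real T * 2^J"
      using of_nat_less_iff[of "2^J1 * T" n, where 'a=real]
        of_nat_le_iff[of n "T * 2^J", where 'a=real] by simp_all
    have "T0 * 2^J \<le> real n" using n by linarith
    then have "T0 * 2^J \<le> real T * 2^J" using upper by linarith
    then have "T0 \<le> real T" by simp
    have "real T * (4 * A^J) \<le> real T * (2 * 2^J1)" using J unfolding J1 by (intro mult_left_mono) auto
    then have "4 * (real T * A^J) \<le> 2 * (2^J1 * real T)" by (simp add: algebra_simps)
    moreover have "8 * 2^J1 \<le> 2^J1 * real T" using \<open>T0 \<le> real T\<close> \<open>8 \<le> T0\<close> by simp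
    moreover have "(2::real)^(J+1) = 4 * 2^J1" unfolding J1 by simp
    ultimately have "real T * A^J + (2^(J+1) - 2) \<le> real n"
      using lower by linarith
    with upper \<open>T0 \<le> real T\<close> show "\<exists>T \<in> range (\<lambda>t. 2^t * k). T0 \<le> real T
           \<and> real T * A^J + (2^(J+1) - 2) \<le> real n \<and> real n \<le> real T * 2^J"
      unfolding T_def by blast
  qed
qed

lemma contraction_approaches_fixpoint:
  fixes P :: "real \<Rightarrow> bool" and \<rho> S \<beta> \<epsilon> :: real
  assumes "P S" and "\<rho> \<le> S" and "0 < \<beta>" and "\<beta> \<le> 1" and "0 < \<epsilon>"
    and step: "\<And>V. \<rho> \<le> V \<Longrightarrow> P V \<Longrightarrow> P (V - \<beta> * (V - \<rho>))"
  shows "\<exists>V < \<rho> + \<epsilon>. P V"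
proof -
  have iterate: "P (\<rho> + (1 - \<beta>)^i * (S - \<rho>))" for i
  proof (induction i)
    case 0
    show ?case using \<open>P S\<close> by simp
  next
    case (Suc i)
    have "\<rho> \<le> \<rho> + (1 - \<beta>)^i * (S - \<rho>)" using assms by simp
    from step[OF this Suc.IH] show ?case by (simp add: algebra_simps)
  qed
  show ?thesis
  proof (cases "\<beta> = 1 \<or> S = \<rho>")
    case True
    then show ?thesis using iterate[of 1] \<open>0 < \<epsilon>\<close> by (intro exI[of _ \<rho>]) auto
  next
    case False
    then have "0 < S - \<rho>" "1 - \<beta> < 1" "0 < 1 - \<beta>" using assms by auto
    then obtain i where "(1 - \<beta>)^i < \<epsilon> / (S - \<rho>)"
      using real_arch_pow_inv[of "\<epsilon> / (S - \<rho>)" "1 - \<beta>"] \<open>0 < \<epsilon>\<close> by auto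
    then have "\<rho> + (1 - \<beta>)^i * (S - \<rho>) < \<rho> + \<epsilon>"
      using \<open>0 < S - \<rho>\<close> by (simp add: less_divide_eq)
    then show ?thesis using iterate by blast
  qed
qed

locale restricted_subadditive =
  fixes a :: "nat \<Rightarrow> real" and \<mu> :: real and N :: nat
  assumes mu_gt_1: "1 < \<mu>" and N_pos: "1 \<le> N"
    and subadditive: "\<And>n m. N \<le> n \<Longrightarrow> n \<le> m \<Longrightarrow> real m \<le> \<mu> * real n \<Longrightarrow>
           a (n + m) \<le> a n + a m"
begin

lemma doubling_bound:
  assumes "N \<le> k"
  shows "a (2^t * k) \<le> 2^t * a k"
proof (induction t)
  case 0
  show ?case by simp
next
  case (Suc t)
  have "k \<le> 2^t * k" by simp
  then have "N \<le> 2^t * k" using assms by linarith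
  moreover have "1 * real (2^t * k) \<le> \<mu> * real (2^t * k)"
    using mu_gt_1 by (intro mult_right_mono) auto
  ultimately have "a (2^t * k + 2^t * k) \<le> a (2^t * k) + a (2^t * k)"
    by (intro subadditive) auto
  moreover have "2^Suc t * k = 2^t * k + 2^t * k" by simp
  ultimately show ?case using Suc.IH by (simp only:) simp
qed

lemma eventually_linear_bound: "\<exists>S. eventually (\<lambda>n. a n \<le> S * real n) sequentially"
proof -
  obtain M :: nat where "1 / (\<mu> - 1) \<le> real M" using real_arch_simple by blast
  define M0 where "M0 = max N M"
  have "1 \<le> (\<mu> - 1) * real M"
    using \<open>1 / (\<mu> - 1) \<le> real M\<close> mu_gt_1 by (simp add: divide_le_eq mult.commute)
  also have "\<dots> \<le> (\<mu> - 1) * real M0" using mu_gt_1 by (intro mult_left_mono) (auto simp: M0_def)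
  finally have M0: "1 \<le> (\<mu> - 1) * real M0" .
  have "N \<le> M0" by (simp add: M0_def)
  define S where "S = Max ((\<lambda>j. a j / real j) ` {M0..2 * M0})"
  have "a n \<le> S * real n" if "M0 \<le> n" for n
    using that
  proof (induction n rule: less_induct)
    case (less n)
    have "0 < real n" using less.prems \<open>N \<le> M0\<close> N_pos by simp
    show ?case
    proof (cases "n \<le> 2 * M0")
      case True
      then have "a n / real n \<le> S" unfolding S_def using less.prems by (intro Max_ge) auto
      then show ?thesis using \<open>0 < real n\<close> by (simp add: divide_le_eq)
    next
      case False
      define m where "m = n div 2"
      define r where "r = n - m"
      have "n = m + r" "M0 \<le> m" "m \<le> r" "r \<le> m + 1" "r < n" "m < n"
        using False \<open>N \<le> M0\<close> N_pos unfolding m_def r_def by auto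
      moreover have "real r \<le> \<mu> * real m"
        using M0 \<open>M0 \<le> m\<close> \<open>r \<le> m + 1\<close> mu_gt_1 mult_left_mono[of "real M0" "real m" "\<mu> - 1"]
        by (simp add: algebra_simps)
      ultimately have "a n \<le> a m + a r" using \<open>N \<le> M0\<close> by (auto intro: subadditive)
      moreover have "a m \<le> S * real m" "a r \<le> S * real r"
        using less.IH \<open>M0 \<le> m\<close> \<open>m \<le> r\<close> \<open>r < n\<close> \<open>m < n\<close> by auto
      ultimately show ?thesis using \<open>n = m + r\<close> by (simp add: algebra_simps)
    qed
  qed
  then show ?thesis unfolding eventually_sequentially by blast
qed

lemma split_off_bound:
  assumes bound: "\<And>x. X \<le> x \<Longrightarrow> a x \<le> V * real x"
    and large: "\<mu> * real (max X N) \<le> real c"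
    and n: "real n \<le> 2 * real c" "real c * (1 + 1 / \<mu>) \<le> real n"
  shows "a n \<le> a c + V * (real n - real c)"
proof -
  have "real c \<le> real c * (1 + 1 / \<mu>)" using mu_gt_1 by (simp add: algebra_simps)
  then have "c \<le> n" using n by linarith
  define d where "d = n - c"
  have d: "n = d + c" "real d = real n - real c" using \<open>c \<le> n\<close> by (simp_all add: d_def)
  have "d \<le> c" using n d by linarith
  have "real c / \<mu> \<le> real d" using n(2) d(2) by (simp add: algebra_simps)
  then have "real c \<le> \<mu> * real d" using mu_gt_1 by (simp add: divide_le_eq mult.commute)
  then have "\<mu> * real (max X N) \<le> \<mu> * real d" using large by linarith
  then have "max X N \<le> d" using mu_gt_1 by (simp only: mult_le_cancel_left_pos of_nat_le_iff)
  then have "X \<le> d" "N \<le> d" by simp_all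
  have "a n \<le> a d + a c" unfolding d(1) using \<open>N \<le> d\<close> \<open>d \<le> c\<close> \<open>real c \<le> \<mu> * real d\<close>
    by (rule subadditive)
  then show ?thesis using bound[OF \<open>X \<le> d\<close>] d(2) by (simp add: algebra_simps)
qed

lemma peeling_bound:
  assumes bound: "\<And>x. X \<le> x \<Longrightarrow> a x \<le> V * real x"
    and large: "\<mu> * real (max X N) \<le> real T" "4 / (1 - 1 / \<mu>) \<le> real T"
  shows "real T * (1 + 1 / \<mu>)^j + (2^(j+1) - 2) \<le> real n \<Longrightarrow> real n \<le> real T * 2^j
     \<Longrightarrow> a n \<le> a T + V * (real n - real T)"
proof (induction j arbitrary: n)
  case 0
  then have "n = T" by simp
  then show ?case by simp
next
  case (Suc j)
  have A: "1 < 1 + 1 / \<mu>" "1 + 1 / \<mu> < 2" using mu_gt_1 by auto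
  moreover have "4 / (2 - (1 + 1 / \<mu>)) \<le> real T" using large by simp
  ultimately obtain c :: nat where
    c: "real T * (1 + 1 / \<mu>)^j + (2^(j+1) - 2) \<le> real c" "real c \<le> real T * 2^j"
       "real n \<le> 2 * real c" "real c * (1 + 1 / \<mu>) \<le> real n"
    using interval_predecessor[OF A _ Suc.prems] by blast
  have "real T \<le> real T * (1 + 1 / \<mu>)^j" using A by (simp add: mult_le_cancel_left1)
  moreover have "(2::real) \<le> 2^(j+1)" using one_le_power[of "2::real" j] by simp
  ultimately have "real T \<le> real c" using c(1) by linarith
  then have "\<mu> * real (max X N) \<le> real c" using large(1) by linarith
  from split_off_bound[OF bound this c(3,4)]
  have "a n \<le> a c + V * (real n - real c)" .
  then show ?case using Suc.IH[OF c(1,2)] by (simp add: algebra_simps)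
qed

lemma improve_linear_bound:
  assumes k: "N \<le> k" and J: "4 * (1 + 1 / \<mu>)^J \<le> 2^J" and V: "a k / real k \<le> V"
    and bound: "eventually (\<lambda>n. a n \<le> V * real n) sequentially"
  shows "eventually (\<lambda>n. a n \<le> (V - 1 / 2^J * (V - a k / real k)) * real n) sequentially"
proof -
  obtain X where X: "\<And>x. X \<le> x \<Longrightarrow> a x \<le> V * real x"
    using bound unfolding eventually_sequentially by blast
  define T0 where "T0 = \<mu> * real (max X N) + 4 / (1 - 1 / \<mu>) + 8"
  have "0 < k" using k N_pos by simp
  have "0 \<le> \<mu> * real (max X N)" "0 \<le> 4 / (1 - 1 / \<mu>)" using mu_gt_1 by auto
  then have "8 \<le> T0" by (simp add: T0_def)
  from eventually_doubling_base[OF \<open>0 < k\<close> J this] show ?thesis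
  proof (rule eventually_mono)
    fix n assume "\<exists>T \<in> range (\<lambda>t. 2^t * k). T0 \<le> real T
      \<and> real T * (1 + 1 / \<mu>)^J + (2^(J+1) - 2) \<le> real n \<and> real n \<le> real T * 2^J"
    then obtain t where T0: "T0 \<le> real (2^t * k)"
      and n: "real (2^t * k) * (1 + 1 / \<mu>)^J + (2^(J+1) - 2) \<le> real n"
             "real n \<le> real (2^t * k) * 2^J"
      by blast
    define T where "T = 2^t * k"
    have large: "\<mu> * real (max X N) \<le> real T" "4 / (1 - 1 / \<mu>) \<le> real T"
      using T0 \<open>0 \<le> \<mu> * real (max X N)\<close> \<open>0 \<le> 4 / (1 - 1 / \<mu>)\<close>
      unfolding T_def T0_def by linarith+
    have "a n \<le> a T + V * (real n - real T)"
      using peeling_bound[OF X large] n unfolding T_def by blast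
    moreover have "a T \<le> real T * (a k / real k)"
      using doubling_bound[OF k, of t] \<open>0 < k\<close> by (simp add: T_def)
    moreover have "real n / 2^J * (V - a k / real k) \<le> real T * (V - a k / real k)"
      using n(2) V unfolding T_def by (intro mult_right_mono) (simp_all add: divide_le_eq)
    ultimately show "a n \<le> (V - 1 / 2^J * (V - a k / real k)) * real n"
      by (simp add: algebra_simps)
  qed
qed

lemma eventually_ratio_le:
  assumes k: "N \<le> k" and "0 < \<epsilon>"
  shows "eventually (\<lambda>n. a n / real n \<le> a k / real k + \<epsilon>) sequentially"
proof -
  define \<rho> where "\<rho> = a k / real k"
  define P where "P V \<longleftrightarrow> eventually (\<lambda>n. a n \<le> V * real n) sequentially" for V
  obtain S where "P S" using eventually_linear_bound unfolding P_def by blast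
  then have "P (max S \<rho>)" unfolding P_def
    by (elim eventually_mono) (metis max.cobounded1 mult_right_mono of_nat_0_le_iff order_trans)
  obtain J where J: "4 * (1 + 1 / \<mu>)^J \<le> 2^J"
    using exists_power_gap[of "1 + 1 / \<mu>" 2 4] mu_gt_1 by auto
  have step: "P (V - 1 / 2^J * (V - \<rho>))" if "\<rho> \<le> V" "P V" for V
    using improve_linear_bound[OF k J] that unfolding P_def \<rho>_def by blast
  have "(1::real) \<le> 2^J" by simp
  then obtain V where "V < \<rho> + \<epsilon>" "P V"
    using contraction_approaches_fixpoint[of P "max S \<rho>" \<rho> "1 / 2^J" \<epsilon>]
      \<open>P (max S \<rho>)\<close> \<open>0 < \<epsilon>\<close> step by auto
  from \<open>P V\<close> eventually_gt_at_top[of 0] show ?thesis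
    unfolding P_def \<rho>_def[symmetric]
  proof (elim eventually_elim2)
    fix n :: nat assume "a n \<le> V * real n" "0 < n"
    moreover have "V * real n \<le> (\<rho> + \<epsilon>) * real n"
      using \<open>V < \<rho> + \<epsilon>\<close> by (intro mult_right_mono) auto
    ultimately have "a n \<le> (\<rho> + \<epsilon>) * real n" by linarith
    with \<open>0 < n\<close> show "a n / real n \<le> \<rho> + \<epsilon>" by (simp add: divide_le_eq)
  qed
qed

lemma eventually_ratio_less:
  assumes "(INF k\<in>{N..}. ereal (a k / real k)) < u"
  shows "eventually (\<lambda>n. ereal (a n / real n) < u) sequentially"
proof -
  obtain k where k: "N \<le> k" "ereal (a k / real k) < u"
    using assms by (auto simp: INF_less_iff)
  then obtain r where r: "a k / real k < r" "ereal r < u" using ereal_dense2 by fastforce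
  define \<epsilon> where "\<epsilon> = (r - a k / real k) / 2"
  have "0 < \<epsilon>" "a k / real k + \<epsilon> < r" using r(1) by (simp_all add: \<epsilon>_def field_simps)
  from eventually_ratio_le[OF k(1) this(1)] show ?thesis
  proof (rule eventually_mono)
    fix n assume "a n / real n \<le> a k / real k + \<epsilon>"
    then have "ereal (a n / real n) < ereal r" using \<open>a k / real k + \<epsilon> < r\<close> by simp
    then show "ereal (a n / real n) < u" using r(2) by (rule less_trans)
  qed
qed

end

theorem theorem3p2:
  fixes a :: "nat \<Rightarrow> real" and \<mu> :: real and N :: nat
  assumes "\<mu> > 1" and "N \<ge> 1"
    and "\<And>n m. N \<le> n \<Longrightarrow> n \<le> m \<Longrightarrow> real m \<le> \<mu> * real n \<Longrightarrow>
           a (n + m) \<le> a n + a m"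
  shows "((\<lambda>n. ereal (a n / real n)) \<longlongrightarrow> (INF k\<in>{N..}. ereal (a k / real k))) sequentially"
proof -
  interpret restricted_subadditive a \<mu> N using assms by unfold_locales auto
  show ?thesis
  proof (rule order_tendstoI)
    fix l assume "l < (INF k\<in>{N..}. ereal (a k / real k))"
    then have "\<forall>n\<ge>N. l < ereal (a n / real n)" by (auto intro: less_le_trans INF_lower)
    then show "eventually (\<lambda>n. l < ereal (a n / real n)) sequentially"
      unfolding eventually_sequentially by blast
  qed (rule eventually_ratio_less)
qed

end
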